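(* Let $X\subseteq\Omega$ be club in $\Omega$ with $0\notin X$. If $\alpha<\beta<\varepsilon_{\Omega+1}$, then $\Theta_X(\alpha)<\Theta_X(\beta)$ if and only if $\alpha^*<\Theta_X(\beta)$.
   Context: $\Omega$ is the first uncountable ordinal; $\varepsilon_{\Omega+1}$ the least $\varepsilon>\Omega$ with $\omega^\varepsilon=\varepsilon$. Every $0<\xi<\varepsilon_{\Omega+1}$ has a unique $\Omega$-normal form $\xi=\Omega^{\alpha}\beta+\gamma$ with $0<\beta<\Omega$, $\gamma<\Omega^{\alpha}$; $C(0)=\{0\}$, $C(\Omega^\alpha\beta+\gamma)=C(\alpha)\cup C(\gamma)\cup\{\beta\}$; $\xi^*=\max C(\xi)$. $\Theta_X(\xi)$ is defined by recursion on $\xi<\varepsilon_{\Omega+1}$ as the least $\theta\in X$ with $\theta>\xi^*$ such that every $\zeta<\xi$ with $\zeta^*<\theta$ satisfies $\Theta_X(\zeta)<\theta$. *)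

theory Defs
  imports "HOL-Library.Countable_Set"
begin

text \<open>The countable ordinals (the ordinals below Omega) are modelled by a well-ordered type
  'a whose every proper initial segment is countable while the whole type is uncountable,
  i.e. a type of order type omega_1.  Ordinals below epsilon_{Omega+1} are represented by
  terms in Omega-normal form:  OP a b c  stands for  Omega^a * b + c.\<close>

definition ozero :: "'a::wellorder" where
  "ozero = (LEAST x. True)"

definition omega1_type :: "'a::wellorder itself \<Rightarrow> bool" where
  "omega1_type _ \<longleftrightarrow> uncountable (UNIV :: 'a set) \<and> (\<forall>x::'a. countable {y. y < x})"

datatype 'a ot = OZ | OP "'a ot" 'a "'a ot"

fun olt :: "'a::wellorder ot \<Rightarrow> 'a ot \<Rightarrow> bool" where
  "olt OZ OZ = False"
| "olt OZ (OP _ _ _) = True"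
| "olt (OP _ _ _) OZ = False"
| "olt (OP a b c) (OP a' b' c') =
     (olt a a' \<or> (a = a' \<and> (b < b' \<or> (b = b' \<and> olt c c'))))"

fun onf :: "'a::wellorder ot \<Rightarrow> bool" where
  "onf OZ = True"
| "onf (OP a b c) = (onf a \<and> onf c \<and> ozero < b \<and>
     (case c of OZ \<Rightarrow> True | OP a' _ _ \<Rightarrow> olt a' a))"

fun oC :: "'a::wellorder ot \<Rightarrow> 'a set" where
  "oC OZ = {ozero}"
| "oC (OP a b c) = oC a \<union> oC c \<union> {b}"

definition ostar :: "'a::wellorder ot \<Rightarrow> 'a" where
  "ostar \<xi> = Max (oC \<xi>)"

definition club :: "'a::wellorder set \<Rightarrow> bool" where
  "club X \<longleftrightarrow> (\<forall>x. \<exists>y\<in>X. x < y) \<and>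
     (\<forall>S. S \<subseteq> X \<and> S \<noteq> {} \<and> (\<exists>b. \<forall>s\<in>S. s \<le> b) \<longrightarrow> (LEAST b. \<forall>s\<in>S. s \<le> b) \<in> X)"

text \<open>Theta_X, the unique function satisfying the recursive definition on normal forms
  (value ozero, irrelevant, outside normal forms).\<close>
definition Theta :: "'a::wellorder set \<Rightarrow> 'a ot \<Rightarrow> 'a" where
  "Theta X = (THE f. \<forall>\<xi>. f \<xi> = (if onf \<xi> then
      (LEAST \<theta>. \<theta> \<in> X \<and> ostar \<xi> < \<theta> \<and>
         (\<forall>\<zeta>. onf \<zeta> \<and> olt \<zeta> \<xi> \<and> ostar \<zeta> < \<theta> \<longrightarrow> f \<zeta> < \<theta>))
      else ozero))"

end

theory Submission
  imports Defs
begin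

text \<open>Comparison of normal forms is well-founded, so the recursion defining \<open>Theta X\<close> has a
  unique solution and \<open>Theta X \<xi>\<close> is the least \<open>\<theta>\<close> with the defining property, provided such a
  \<open>\<theta>\<close> exists.  It does: for countable \<open>t\<close> the terms with all coefficients \<open>\<le> t\<close> form a countable
  set, so \<open>Theta X\<close> is bounded on them by some \<open>bound t < \<Omega>\<close>, and closing under \<open>bound\<close>
  countably often inside the club \<open>X\<close> yields a suitable \<open>\<theta>\<close>.  Given the defining property the
  equivalence is immediate: \<open>\<alpha>\<^sup>* < Theta X \<alpha>\<close>, and conversely \<open>\<alpha> < \<beta>\<close> with
  \<open>\<alpha>\<^sup>* < Theta X \<beta>\<close> forces \<open>Theta X \<alpha> < Theta X \<beta>\<close>.\<close>

definition onf_less :: "('a::wellorder ot \<times> 'a ot) set" where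
  "onf_less = {(s, t). onf s \<and> onf t \<and> olt s t}"

lemma OZ_in_acc_onf_less: "OZ \<in> Wellfounded.acc onf_less"
  by (rule acc.accI) (auto simp: onf_less_def elim: olt.elims)

lemma OP_in_acc_onf_less:
  assumes "a \<in> Wellfounded.acc onf_less" and "onf (OP a b c)"
  shows "OP a b c \<in> Wellfounded.acc onf_less"
  using assms
proof (induction a arbitrary: b c rule: acc.induct)
  case (accI a)
  note IH_exp = accI.IH
  show ?case
    using accI.prems
  proof (induction b arbitrary: c rule: less_induct)
    case (less b)
    have "c \<in> Wellfounded.acc onf_less"
    proof (cases c)
      case OZ
      then show ?thesis using OZ_in_acc_onf_less by simp
    next
      case (OP a' b' c')
      then have "(a', a) \<in> onf_less" using less.prems by (auto simp: onf_less_def)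
      then show ?thesis using IH_exp less.prems OP by auto
    qed
    then show ?case
      using less.prems
    proof (induction c rule: acc.induct)
      case (accI c)
      show ?case
      proof (rule acc.accI)
        fix s assume s_less: "(s, OP a b c) \<in> onf_less"
        show "s \<in> Wellfounded.acc onf_less"
        proof (cases s)
          case OZ
          then show ?thesis using OZ_in_acc_onf_less by simp
        next
          case (OP a' b' c')
          have "onf s" using s_less by (simp add: onf_less_def)
          have "olt a' a \<or> (a' = a \<and> (b' < b \<or> (b' = b \<and> olt c' c)))"
            using s_less OP by (simp add: onf_less_def)
          then consider "olt a' a" | "a' = a" "b' < b" | "a' = a" "b' = b" "olt c' c"
            by blast
          then show ?thesis
          proof cases
            case 1
            then have "(a', a) \<in> onf_less"
              using \<open>onf s\<close> OP accI.prems by (simp add: onf_less_def)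
            then show ?thesis using IH_exp \<open>onf s\<close> OP by auto
          next
            case 2
            then show ?thesis using less.IH \<open>onf s\<close> OP by auto
          next
            case 3
            then have "(c', c) \<in> onf_less"
              using \<open>onf s\<close> OP accI.prems by (simp add: onf_less_def)
            then show ?thesis using accI.IH \<open>onf s\<close> OP 3 by auto
          qed
        qed
      qed
    qed
  qed
qed

lemma wf_onf_less: "wf onf_less"
proof (rule acc_wfI, rule allI)
  fix t :: "'a ot"
  show "t \<in> Wellfounded.acc onf_less"
  proof (cases "onf t")
    case False
    show ?thesis by (rule acc.accI) (use False in \<open>simp add: onf_less_def\<close>)
  next
    case True
    then show ?thesis
      by (induction t) (simp_all add: OZ_in_acc_onf_less OP_in_acc_onf_less)
  qed
qed
lemma wf_fixpoint_unique:
  assumes "wf R" and "adm_wf R F"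
  shows "\<exists>!f. \<forall>x. f x = F f x"
proof (rule ex_ex1I)
  show "\<exists>f. \<forall>x. f x = F f x"
    using wfrec_fixpoint[OF assms] by metis
next
  fix f g
  assume f: "\<forall>x. f x = F f x" and g: "\<forall>x. g x = F g x"
  have "f x = g x" for x
    using \<open>wf R\<close>
  proof (induction x rule: wf_induct_rule)
    case (less x)
    then have "F f x = F g x"
      using \<open>adm_wf R F\<close> unfolding adm_wf_def by blast
    then show ?case using f g by metis
  qed
  then show "f = g" by blast
qed

definition Theta_step :: "'a::wellorder set \<Rightarrow> ('a ot \<Rightarrow> 'a) \<Rightarrow> 'a ot \<Rightarrow> 'a" where
  "Theta_step X f \<xi> = (if onf \<xi> then
      (LEAST \<theta>. \<theta> \<in> X \<and> ostar \<xi> < \<theta> \<and>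
         (\<forall>\<zeta>. onf \<zeta> \<and> olt \<zeta> \<xi> \<and> ostar \<zeta> < \<theta> \<longrightarrow> f \<zeta> < \<theta>))
      else ozero)"

lemma adm_wf_Theta_step: "adm_wf onf_less (Theta_step X)"
  unfolding adm_wf_def Theta_step_def onf_less_def
  by (intro allI impI if_cong refl arg_cong[where f = Least] ext conj_cong) auto

lemma Theta_unfold:
  assumes "onf \<xi>"
  shows "Theta X \<xi> = (LEAST \<theta>. \<theta> \<in> X \<and> ostar \<xi> < \<theta> \<and>
           (\<forall>\<zeta>. onf \<zeta> \<and> olt \<zeta> \<xi> \<and> ostar \<zeta> < \<theta> \<longrightarrow> Theta X \<zeta> < \<theta>))"
proof -
  have "Theta X = (THE f. \<forall>\<xi>. f \<xi> = Theta_step X f \<xi>)"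
    by (simp add: Theta_def Theta_step_def)
  moreover have "\<forall>\<xi>. (THE f. \<forall>\<xi>. f \<xi> = Theta_step X f \<xi>) \<xi> =
      Theta_step X (THE f. \<forall>\<xi>. f \<xi> = Theta_step X f \<xi>) \<xi>"
    by (rule theI'[OF wf_fixpoint_unique[OF wf_onf_less adm_wf_Theta_step]])
  ultimately have "Theta X \<xi> = Theta_step X (Theta X) \<xi>"
    by simp
  then show ?thesis
    using assms by (simp add: Theta_step_def)
qed

instance ot :: (countable) countable
  by countable_datatype

lemma countable_ot_over:
  assumes "countable (A :: 'a set)"
  shows "countable {t :: 'a ot. set_ot t \<subseteq> A}"
proof -
  obtain g :: "'a \<Rightarrow> nat" where g: "inj_on g A"
    using assms unfolding countable_def by blast
  have "inj_on (map_ot g) {t. set_ot t \<subseteq> A}"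
    by (rule inj_onI, rule ot.inj_map_strong) (auto dest: inj_onD[OF g])
  moreover have "countable (map_ot g ` {t. set_ot t \<subseteq> A})"
    by (rule countableI_type)
  ultimately show ?thesis using countable_image_inj_on by blast
qed

lemma set_ot_le_ostar: "y \<in> set_ot \<zeta> \<Longrightarrow> y \<le> ostar \<zeta>"
proof -
  assume "y \<in> set_ot \<zeta>"
  moreover have "set_ot \<zeta> \<subseteq> oC \<zeta>"
    by (induction \<zeta>) auto
  moreover have "finite (oC \<zeta>)"
    by (induction \<zeta>) auto
  ultimately show ?thesis
    unfolding ostar_def by (auto intro: Max_ge)
qed

lemma omega1_countable_atMost:
  assumes "omega1_type TYPE('a::wellorder)"
  shows "countable {..t :: 'a}"
proof -
  have "countable {..<t}"
    using assms by (simp add: omega1_type_def lessThan_def)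
  moreover have "{..t} = insert t {..<t}"
    by auto
  ultimately show ?thesis
    by simp
qed

lemma countable_ostar_le:
  assumes "omega1_type TYPE('a::wellorder)"
  shows "countable {\<zeta> :: 'a ot. ostar \<zeta> \<le> t}"
proof (rule countable_subset)
  show "{\<zeta>. ostar \<zeta> \<le> t} \<subseteq> {\<zeta>. set_ot \<zeta> \<subseteq> {..t}}"
    using set_ot_le_ostar order_trans by fastforce
  show "countable {\<zeta> :: 'a ot. set_ot \<zeta> \<subseteq> {..t}}"
    by (rule countable_ot_over[OF omega1_countable_atMost[OF assms]])
qed

lemma omega1_countable_bounded:
  assumes "omega1_type TYPE('a::wellorder)" and "countable (S :: 'a set)"
  shows "\<exists>b. \<forall>s\<in>S. s < b"
proof -
  have "countable (\<Union>s\<in>S. {..s})"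
    using assms omega1_countable_atMost by blast
  moreover have "uncountable (UNIV :: 'a set)"
    using assms(1) by (simp add: omega1_type_def)
  ultimately have "(\<Union>s\<in>S. {..s}) \<noteq> UNIV"
    by auto
  then obtain b where "b \<notin> (\<Union>s\<in>S. {..s})"
    by blast
  then show ?thesis
    by (auto simp: not_le)
qed

lemma club_closure_point:
  fixes X :: "'a::wellorder set" and h :: "'a \<Rightarrow> 'a"
  assumes om: "omega1_type TYPE('a)" and "club X"
  shows "\<exists>\<theta>\<in>X. x < \<theta> \<and> (\<forall>t<\<theta>. h t < \<theta>)"
proof -
  have unbounded: "\<exists>y\<in>X. z < y" for z
    using \<open>club X\<close> unfolding club_def by blast
  have closed: "(LEAST b. \<forall>s\<in>S. s \<le> b) \<in> X"
    if "S \<subseteq> X" "S \<noteq> {}" "\<exists>b. \<forall>s\<in>S. s \<le> b" for S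
    using \<open>club X\<close> that unfolding club_def by blast
  \<comment> \<open>\<open>h\<close> need not be monotone, so each step bounds \<open>h\<close> on a whole initial segment.\<close>
  have "\<exists>y. y \<in> X \<and> t < y \<and> (\<forall>s\<le>t. h s < y)" for t
  proof -
    have "countable (h ` {..t})"
      using omega1_countable_atMost[OF om] by blast
    then obtain b where "\<forall>s\<in>h ` {..t}. s < b"
      by (blast dest: omega1_countable_bounded[OF om])
    moreover obtain y where "y \<in> X" "max t b < y"
      using unbounded by blast
    ultimately show ?thesis
      by (metis atMost_iff image_eqI less_trans max.strict_boundedE)
  qed
  then obtain next_pt
    where next_pt: "\<And>t. next_pt t \<in> X \<and> t < next_pt t \<and> (\<forall>s\<le>t. h s < next_pt t)"
    by metis
  define th where "th n = (next_pt ^^ Suc n) x" for n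
  have th_0: "th 0 = next_pt x" and th_Suc: "th (Suc n) = next_pt (th n)" for n
    by (simp_all add: th_def)
  have th_in: "th n \<in> X" for n
    by (cases n) (simp_all add: th_0 th_Suc next_pt)
  have "countable (range th)"
    by simp
  then obtain b where "\<forall>s\<in>range th. s < b"
    by (blast dest: omega1_countable_bounded[OF om])
  then have bounded: "\<exists>b. \<forall>s\<in>range th. s \<le> b"
    by (meson less_imp_le)
  define L where "L = (LEAST b. \<forall>s\<in>range th. s \<le> b)"
  have "L \<in> X"
    unfolding L_def using th_in bounded by (intro closed) auto
  have upper: "th n \<le> L" for n
    using LeastI_ex[OF bounded] unfolding L_def by blast
  have "x < L"
    using next_pt[of x] upper[of 0] th_0 by (metis less_le_trans)
  moreover have "h t < L" if "t < L" for t
  proof -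
    have "\<not> L \<le> t"
      using \<open>t < L\<close> by simp
    then have "\<not> (\<forall>s\<in>range th. s \<le> t)"
      unfolding L_def using Least_le[of "\<lambda>b. \<forall>s\<in>range th. s \<le> b" t] by blast
    then obtain n where "t < th n"
      by (auto simp: not_le)
    then have "h t < th (Suc n)"
      using next_pt[of "th n"] th_Suc[of n] by simp
    then show ?thesis
      using upper[of "Suc n"] by (rule less_le_trans)
  qed
  ultimately show ?thesis
    using \<open>L \<in> X\<close> by blast
qed

lemma Theta_LeastI:
  assumes om: "omega1_type TYPE('a::wellorder)" and "club (X :: 'a set)" and "onf \<xi>"
  shows "Theta X \<xi> \<in> X \<and> ostar \<xi> < Theta X \<xi> \<and>
    (\<forall>\<zeta>. onf \<zeta> \<and> olt \<zeta> \<xi> \<and> ostar \<zeta> < Theta X \<xi> \<longrightarrow> Theta X \<zeta> < Theta X \<xi>)"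
proof -
  have "\<exists>b. \<forall>s\<in>Theta X ` {\<zeta>. ostar \<zeta> \<le> t}. s < b" for t
    using countable_image[OF countable_ostar_le[OF om]]
    by (blast dest: omega1_countable_bounded[OF om])
  then obtain bound where bound: "\<And>t \<zeta>. ostar \<zeta> \<le> t \<Longrightarrow> Theta X \<zeta> < bound t"
    by (metis image_eqI mem_Collect_eq)
  obtain \<theta> where "\<theta> \<in> X" "ostar \<xi> < \<theta>" and closed: "\<forall>t<\<theta>. bound t < \<theta>"
    using club_closure_point[OF om \<open>club X\<close>] by blast
  moreover have "Theta X \<zeta> < \<theta>" if "ostar \<zeta> < \<theta>" for \<zeta>
    using bound[of \<zeta> "ostar \<zeta>"] closed that by (meson less_trans order_refl)
  ultimately have "\<exists>\<theta>. \<theta> \<in> X \<and> ostar \<xi> < \<theta> \<and>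
      (\<forall>\<zeta>. onf \<zeta> \<and> olt \<zeta> \<xi> \<and> ostar \<zeta> < \<theta> \<longrightarrow> Theta X \<zeta> < \<theta>)"
    by blast
  then show ?thesis
    unfolding Theta_unfold[OF \<open>onf \<xi>\<close>] by (rule LeastI_ex)
qed

theorem lemma3p2:
  fixes X :: "'a::wellorder set" and \<alpha> \<beta> :: "'a ot"
  assumes "omega1_type TYPE('a)"
    and "club X" and "ozero \<notin> X"
    and "onf \<alpha>" and "onf \<beta>" and "olt \<alpha> \<beta>"
  shows "Theta X \<alpha> < Theta X \<beta> \<longleftrightarrow> ostar \<alpha> < Theta X \<beta>"
proof
  assume "Theta X \<alpha> < Theta X \<beta>"
  moreover have "ostar \<alpha> < Theta X \<alpha>"
    using Theta_LeastI[OF assms(1,2,4)] by blast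
  ultimately show "ostar \<alpha> < Theta X \<beta>" by simp
next
  assume "ostar \<alpha> < Theta X \<beta>"
  then show "Theta X \<alpha> < Theta X \<beta>"
    using Theta_LeastI[OF assms(1,2,5)] assms(4,6) by blast
qed

end
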